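(* Let $R>0$ and $\gamma>1$. For admissible states (density $\rho>0$, temperature $T>0$, velocity $V=(V_1,V_2,V_3)$), let $u=(\rho,\rho V_1,\rho V_2,\rho V_3,\rho E)^T$ with $E=\frac{R}{\gamma-1}T+\frac12|V|^2$. For two admissible states $L,R$ and auxiliary variables $Z=(Z_1,\dots,Z_5)$ depending on the state, write $$\overline{Z_k}=\tfrac12(Z_{k,L}+Z_{k,R}),\qquad \overline{Z_k}_{\log}=\frac{Z_{k,R}-Z_{k,L}}{\log Z_{k,R}-\log Z_{k,L}}$$ (with $\overline{Z_k}_{\log}=Z_{k,L}$ when $Z_{k,L}=Z_{k,R}$). Also write $\overline{Z_k^2}=\frac12(Z_{k,L}^2+Z_{k,R}^2)$. Define two two-point functions as follows. (i) With $Z=\bigl(1/\sqrt T,\;V_1/\sqrt T,\;V_2/\sqrt T,\;V_3/\sqrt T,\;\rho\sqrt T\bigr)$: $$U_1^{sc}(u_L,u_R)=\begin{pmatrix}\overline{Z_5}_{\log}\overline{Z_1}\\ \overline{Z_5}_{\log}\overline{Z_2}\\ \overline{Z_5}_{\log}\overline{Z_3}\\ \overline{Z_5}_{\log}\overline{Z_4}\\ \tfrac12\overline{Z_5}_{\log}\Bigl(\frac{R(\gamma+1)}{(\gamma-1)\overline{Z_1}_{\log}}+\frac{1}{\overline{Z_1}}\bigl(\overline{Z_2}^2+\overline{Z_3}^2+\overline{Z_4}^2-R\,\overline{Z_5}/\overline{Z_5}_{\log}\bigr)\Bigr)\end{pmatrix}.$$ (ii) With $Z=(\rho,V_1,V_2,V_3,1/T)$: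 $$U_2^{sc}(u_L,u_R)=\begin{pmatrix}\overline{Z_1}_{\log}\\ \overline{Z_1}_{\log}\overline{Z_2}\\ \overline{Z_1}_{\log}\overline{Z_3}\\ \overline{Z_1}_{\log}\overline{Z_4}\\ \overline{Z_1}_{\log}\Bigl(\frac{R}{(\gamma-1)\overline{Z_5}_{\log}}+\overline{Z_2}^2+\overline{Z_3}^2+\overline{Z_4}^2-\tfrac12\bigl(\overline{Z_2^2}+\overline{Z_3^2}+\overline{Z_4^2}\bigr)\Bigr)\end{pmatrix}.$$ Then each of $U^{sc}=U_1^{sc}$ and $U^{sc}=U_2^{sc}$ has the following properties: - it is symmetric: $U^{sc}(u_L,u_R)=U^{sc}(u_R,u_L)$; - it is consistent: $U^{sc}(u,u)=u$; - it satisfies the shuffle condition $$\bigl(w(u_L)-w(u_R)\bigr)^TU^{sc}(u_L,u_R)=\bigl[w(u_L)^Tu_L-\mathcal S(u_L)\bigr]-\bigl[w(u_R)^Tu_R-\mathcal S(u_R)\bigr].$$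
   Context: Set $c_p=\gamma R/(\gamma-1)$ and specific enthalpy $h=c_pT$. The thermodynamic entropy is $s=\frac{R}{\gamma-1}\log(T/T_\infty)-R\log(\rho/\rho_\infty)$ with fixed reference constants $T_\infty,\rho_\infty>0$. The mathematical entropy is $\mathcal S(u)=-\rho s$. The entropy variables are $$w(u)=\Bigl(\frac{\partial\mathcal S}{\partial u}\Bigr)^T=\Bigl(\frac hT-s-\frac{|V|^2}{2T},\;\frac{V_1}{T},\;\frac{V_2}{T},\;\frac{V_3}{T},\;-\frac1T\Bigr)^T.$$ Notation: $\overline{Z_k}^2$ denotes the square of the arithmetic mean, while $\overline{Z_k^2}$ denotes the arithmetic mean of the squares. *)

theory Defs
  imports "HOL-Analysis.Analysis"
begin

record prim =
  rho :: real
  v1 :: real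
  v2 :: real
  v3 :: real
  temp :: real

definition admissible :: "prim \<Rightarrow> bool" where
  "admissible p \<longleftrightarrow> rho p > 0 \<and> temp p > 0"

definition vsq :: "prim \<Rightarrow> real" where
  "vsq p = (v1 p)\<^sup>2 + (v2 p)\<^sup>2 + (v3 p)\<^sup>2"

definition energy :: "real \<Rightarrow> real \<Rightarrow> prim \<Rightarrow> real" where
  "energy Rg \<gamma> p = Rg / (\<gamma> - 1) * temp p + vsq p / 2"

definition cons :: "real \<Rightarrow> real \<Rightarrow> prim \<Rightarrow> real^5" where
  "cons Rg \<gamma> p = vector [rho p, rho p * v1 p, rho p * v2 p, rho p * v3 p,
                          rho p * energy Rg \<gamma> p]"

definition cp :: "real \<Rightarrow> real \<Rightarrow> real" where
  "cp Rg \<gamma> = \<gamma> * Rg / (\<gamma> - 1)"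

definition enthalpy :: "real \<Rightarrow> real \<Rightarrow> prim \<Rightarrow> real" where
  "enthalpy Rg \<gamma> p = cp Rg \<gamma> * temp p"

definition thermo_entropy :: "real \<Rightarrow> real \<Rightarrow> real \<Rightarrow> real \<Rightarrow> prim \<Rightarrow> real" where
  "thermo_entropy Rg \<gamma> Tinf rhoinf p =
     Rg / (\<gamma> - 1) * ln (temp p / Tinf) - Rg * ln (rho p / rhoinf)"

definition math_entropy :: "real \<Rightarrow> real \<Rightarrow> real \<Rightarrow> real \<Rightarrow> prim \<Rightarrow> real" where
  "math_entropy Rg \<gamma> Tinf rhoinf p = - rho p * thermo_entropy Rg \<gamma> Tinf rhoinf p"

definition entvar :: "real \<Rightarrow> real \<Rightarrow> real \<Rightarrow> real \<Rightarrow> prim \<Rightarrow> real^5" where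
  "entvar Rg \<gamma> Tinf rhoinf p = vector
     [enthalpy Rg \<gamma> p / temp p - thermo_entropy Rg \<gamma> Tinf rhoinf p - vsq p / (2 * temp p),
      v1 p / temp p, v2 p / temp p, v3 p / temp p, - 1 / temp p]"

definition amean :: "real \<Rightarrow> real \<Rightarrow> real" where
  "amean a b = (a + b) / 2"

definition logmean :: "real \<Rightarrow> real \<Rightarrow> real" where
  "logmean a b = (if a = b then a else (b - a) / (ln b - ln a))"

definition sqmean :: "real \<Rightarrow> real \<Rightarrow> real" where
  "sqmean a b = (a\<^sup>2 + b\<^sup>2) / 2"

definition U1 :: "real \<Rightarrow> real \<Rightarrow> prim \<Rightarrow> prim \<Rightarrow> real^5" where
  "U1 Rg \<gamma> L R =
    (let Z1 = (\<lambda>p. 1 / sqrt (temp p));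
         Z2 = (\<lambda>p. v1 p / sqrt (temp p));
         Z3 = (\<lambda>p. v2 p / sqrt (temp p));
         Z4 = (\<lambda>p. v3 p / sqrt (temp p));
         Z5 = (\<lambda>p. rho p * sqrt (temp p));
         m1 = amean (Z1 L) (Z1 R); m2 = amean (Z2 L) (Z2 R);
         m3 = amean (Z3 L) (Z3 R); m4 = amean (Z4 L) (Z4 R);
         m5 = amean (Z5 L) (Z5 R);
         l1 = logmean (Z1 L) (Z1 R); l5 = logmean (Z5 L) (Z5 R)
     in vector [l5 * m1, l5 * m2, l5 * m3, l5 * m4,
                1/2 * l5 * (Rg * (\<gamma> + 1) / ((\<gamma> - 1) * l1)
                   + 1 / m1 * (m2\<^sup>2 + m3\<^sup>2 + m4\<^sup>2 - Rg * m5 / l5))])"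

definition U2 :: "real \<Rightarrow> real \<Rightarrow> prim \<Rightarrow> prim \<Rightarrow> real^5" where
  "U2 Rg \<gamma> L R =
    (let Z1 = rho; Z2 = v1; Z3 = v2; Z4 = v3; Z5 = (\<lambda>p. 1 / temp p);
         m2 = amean (Z2 L) (Z2 R); m3 = amean (Z3 L) (Z3 R); m4 = amean (Z4 L) (Z4 R);
         q2 = sqmean (Z2 L) (Z2 R); q3 = sqmean (Z3 L) (Z3 R); q4 = sqmean (Z4 L) (Z4 R);
         l1 = logmean (Z1 L) (Z1 R); l5 = logmean (Z5 L) (Z5 R)
     in vector [l1, l1 * m2, l1 * m3, l1 * m4,
                l1 * (Rg / ((\<gamma> - 1) * l5) + m2\<^sup>2 + m3\<^sup>2 + m4\<^sup>2 - 1/2 * (q2 + q3 + q4))])"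

definition ec_properties ::
  "real \<Rightarrow> real \<Rightarrow> real \<Rightarrow> real \<Rightarrow> (prim \<Rightarrow> prim \<Rightarrow> real^5) \<Rightarrow> bool" where
  "ec_properties Rg \<gamma> Tinf rhoinf U \<longleftrightarrow>
     (\<forall>L R. admissible L \<longrightarrow> admissible R \<longrightarrow> U L R = U R L) \<and>
     (\<forall>p. admissible p \<longrightarrow> U p p = cons Rg \<gamma> p) \<and>
     (\<forall>L R. admissible L \<longrightarrow> admissible R \<longrightarrow>
        (entvar Rg \<gamma> Tinf rhoinf L - entvar Rg \<gamma> Tinf rhoinf R) \<bullet> U L R =
          (entvar Rg \<gamma> Tinf rhoinf L \<bullet> cons Rg \<gamma> L - math_entropy Rg \<gamma> Tinf rhoinf L)
        - (entvar Rg \<gamma> Tinf rhoinf R \<bullet> cons Rg \<gamma> R - math_entropy Rg \<gamma> Tinf rhoinf R))"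

end

theory Submission
  imports Defs
begin

(* The quantity w(u)\<bullet>u - S(u) is the entropy potential, which for the ideal gas is R \<rho>; so the
   shuffle condition asks that the jump of w, paired with U, be the jump of R \<rho>.  In the auxiliary
   variables Z every entropy variable is a product of Z's, except the first one, which is affine in
   the logarithms of two of the Z's plus a quadratic term.  The defining property of the logarithmic
   mean, logmean a b * (ln a - ln b) = a - b, turns jumps of logarithms into plain jumps, and the
   discrete product rule a1 b1 - a2 b2 = amean a1 a2 (b1 - b2) + amean b1 b2 (a1 - a2) makes the
   remaining terms collapse to R (Z1 Z5)_L - R (Z1 Z5)_R = R \<rho>_L - R \<rho>_R for U1, and to
   R \<rho>_L - R \<rho>_R directly for U2. *)

lemma exhaust_5:
  fixes x :: 5
  shows "x = 1 \<or> x = 2 \<or> x = 3 \<or> x = 4 \<or> x = 5"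
proof (induct x)
  case (of_int z)
  then have "z = 0 \<or> z = 1 \<or> z = 2 \<or> z = 3 \<or> z = 4" by fastforce
  then show ?case by auto
qed

lemma forall_5: "(\<forall>i::5. P i) \<longleftrightarrow> P 1 \<and> P 2 \<and> P 3 \<and> P 4 \<and> P 5"
  by (metis exhaust_5)

lemma UNIV_5: "UNIV = {1, 2, 3, 4, 5::5}"
  using exhaust_5 by auto

lemma sum_5: "sum f (UNIV::5 set) = f 1 + f 2 + f 3 + f 4 + f 5"
  unfolding UNIV_5 by (simp add: ac_simps)

lemma vector_5 [simp]:
  "(vector [x1, x2, x3, x4, x5] :: ('a::zero)^5) $ 1 = x1"
  "(vector [x1, x2, x3, x4, x5] :: ('a::zero)^5) $ 2 = x2"
  "(vector [x1, x2, x3, x4, x5] :: ('a::zero)^5) $ 3 = x3"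
  "(vector [x1, x2, x3, x4, x5] :: ('a::zero)^5) $ 4 = x4"
  "(vector [x1, x2, x3, x4, x5] :: ('a::zero)^5) $ 5 = x5"
  unfolding vector_def by simp_all

lemma vector_5_eq_iff:
  "(vector [x1, x2, x3, x4, x5] :: ('a::zero)^5) = vector [y1, y2, y3, y4, y5] \<longleftrightarrow>
     x1 = y1 \<and> x2 = y2 \<and> x3 = y3 \<and> x4 = y4 \<and> x5 = y5"
  by (simp add: vec_eq_iff forall_5)

lemma vector_5_diff:
  "(vector [x1, x2, x3, x4, x5] :: ('a::ab_group_add)^5) - vector [y1, y2, y3, y4, y5] =
     vector [x1 - y1, x2 - y2, x3 - y3, x4 - y4, x5 - y5]"
  by (simp add: vec_eq_iff forall_5)

lemma inner_vector_5:
  "(vector [x1, x2, x3, x4, x5] :: real^5) \<bullet> vector [y1, y2, y3, y4, y5] =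
     x1 * y1 + x2 * y2 + x3 * y3 + x4 * y4 + x5 * y5"
  by (simp add: inner_vec_def sum_5)

lemma amean_same [simp]: "amean a a = a"
  by (simp add: amean_def)

lemma amean_commute: "amean a b = amean b a"
  by (simp add: amean_def add.commute)

lemma sqmean_commute: "sqmean a b = sqmean b a"
  by (simp add: sqmean_def add.commute)

lemma logmean_same [simp]: "logmean a a = a"
  by (simp add: logmean_def)

lemma logmean_commute: "logmean a b = logmean b a"
  by (simp add: logmean_def) (metis minus_diff_eq minus_divide_divide)

lemma logmean_pos:
  assumes "a > 0" "b > 0"
  shows "logmean a b > 0"
proof (cases a b rule: linorder_cases)
  case less
  then show ?thesis using assms by (simp add: logmean_def)
next
  case greater
  then show ?thesis using assms by (simp add: logmean_def divide_neg_neg)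
qed (use assms in \<open>simp add: logmean_def\<close>)

lemma logmean_ln_diff:
  assumes "a > 0" "b > 0"
  shows "logmean a b * (ln a - ln b) = a - b"
proof (cases "a = b")
  case False
  then have "ln a \<noteq> ln b" using assms by simp
  then show ?thesis using False by (simp add: logmean_def field_simps)
qed (simp add: logmean_def)

lemma cp_eq_Rg_plus_cv:
  assumes "\<gamma> \<noteq> 1"
  shows "cp Rg \<gamma> = Rg + Rg / (\<gamma> - 1)"
  using assms by (simp add: cp_def field_simps)

lemma entvar_inner_cons_minus_math_entropy:
  assumes "\<gamma> \<noteq> 1" "temp p \<noteq> 0"
  shows "entvar Rg \<gamma> Tinf rhoinf p \<bullet> cons Rg \<gamma> p - math_entropy Rg \<gamma> Tinf rhoinf p = Rg * rho p"
proof -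
  have "entvar Rg \<gamma> Tinf rhoinf p \<bullet> cons Rg \<gamma> p =
      rho p * (enthalpy Rg \<gamma> p / temp p - thermo_entropy Rg \<gamma> Tinf rhoinf p - vsq p / (2 * temp p))
      + rho p * (vsq p / temp p) - rho p * (energy Rg \<gamma> p / temp p)"
    unfolding entvar_def cons_def inner_vector_5 vsq_def
    using assms(2) by (simp add: field_simps power2_eq_square)
  moreover have "enthalpy Rg \<gamma> p / temp p = Rg + Rg / (\<gamma> - 1)"
    using assms by (simp add: enthalpy_def cp_eq_Rg_plus_cv)
  moreover have "energy Rg \<gamma> p / temp p = Rg / (\<gamma> - 1) + vsq p / (2 * temp p)"
    using assms(2) by (simp add: energy_def add_divide_distrib)
  ultimately show ?thesis
    by (simp add: math_entropy_def algebra_simps)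
qed

lemma entvar_U1_coords:
  fixes Rg \<gamma> Tinf rhoinf :: real
  assumes "\<gamma> \<noteq> 1" "Tinf > 0" "rhoinf > 0" "admissible p"
  defines "z1 \<equiv> 1 / sqrt (temp p)" and "z2 \<equiv> v1 p / sqrt (temp p)"
    and "z3 \<equiv> v2 p / sqrt (temp p)" and "z4 \<equiv> v3 p / sqrt (temp p)"
    and "z5 \<equiv> rho p * sqrt (temp p)"
    and "c \<equiv> Rg + Rg / (\<gamma> - 1) + Rg / (\<gamma> - 1) * ln Tinf - Rg * ln rhoinf"
  shows "entvar Rg \<gamma> Tinf rhoinf p =
    vector [c + (2 * (Rg / (\<gamma> - 1)) + Rg) * ln z1 + Rg * ln z5 - (z2\<^sup>2 + z3\<^sup>2 + z4\<^sup>2) / 2,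
            z2 * z1, z3 * z1, z4 * z1, - (z1\<^sup>2)]"
proof -
  have T: "temp p > 0" and rho: "rho p > 0" using assms(4) by (auto simp: admissible_def)
  have sqrt_sq: "(sqrt (temp p))\<^sup>2 = temp p" using T by simp
  have "ln (temp p) = - 2 * ln z1" "ln (rho p) = ln z1 + ln z5"
    unfolding z1_def z5_def using T rho by (simp_all add: ln_div ln_mult ln_sqrt)
  then have entropy: "thermo_entropy Rg \<gamma> Tinf rhoinf p =
      Rg / (\<gamma> - 1) * (- 2 * ln z1 - ln Tinf) - Rg * (ln z1 + ln z5 - ln rhoinf)"
    using T rho assms(2,3) by (simp add: thermo_entropy_def ln_div)
  have kinetic: "vsq p / (2 * temp p) = (z2\<^sup>2 + z3\<^sup>2 + z4\<^sup>2) / 2"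
    unfolding vsq_def z2_def z3_def z4_def by (simp add: power_divide sqrt_sq add_divide_distrib)
  have enthalpy: "enthalpy Rg \<gamma> p / temp p = Rg + Rg / (\<gamma> - 1)"
    using T assms(1) by (simp add: enthalpy_def cp_eq_Rg_plus_cv)
  have "v / temp p = v / sqrt (temp p) * z1" for v
    unfolding z1_def using sqrt_sq by (simp add: power2_eq_square)
  moreover have "1 / temp p = z1\<^sup>2"
    unfolding z1_def using sqrt_sq by (simp add: power_divide)
  ultimately show ?thesis
    unfolding vector_5_eq_iff entvar_def entropy kinetic enthalpy c_def z2_def z3_def z4_def
    by (simp add: algebra_simps)
qed

lemma U1_shuffle_in_coords:
  fixes Rg \<gamma> a b p q x1 x2 x3 y1 y2 y3 :: real
  assumes "\<gamma> \<noteq> 1" "a > 0" "b > 0" "p > 0" "q > 0"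
  defines "K \<equiv> Rg / (\<gamma> - 1)" and "l1 \<equiv> logmean a b" and "l5 \<equiv> logmean p q"
    and "m1 \<equiv> amean a b" and "m2 \<equiv> amean x1 y1" and "m3 \<equiv> amean x2 y2"
    and "m4 \<equiv> amean x3 y3" and "m5 \<equiv> amean p q"
  shows "(c + (2 * K + Rg) * ln a + Rg * ln p - (x1\<^sup>2 + x2\<^sup>2 + x3\<^sup>2) / 2
          - (c + (2 * K + Rg) * ln b + Rg * ln q - (y1\<^sup>2 + y2\<^sup>2 + y3\<^sup>2) / 2)) * (l5 * m1)
       + (x1 * a - y1 * b) * (l5 * m2) + (x2 * a - y2 * b) * (l5 * m3) + (x3 * a - y3 * b) * (l5 * m4)
       + (- (a\<^sup>2) - - (b\<^sup>2)) *
           (1/2 * l5 * (Rg * (\<gamma> + 1) / ((\<gamma> - 1) * l1) + 1 / m1 * (m2\<^sup>2 + m3\<^sup>2 + m4\<^sup>2 - Rg * m5 / l5)))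
       = Rg * (a * p - b * q)"
proof -
  have pos: "l1 > 0" "l5 > 0" "m1 > 0"
    using assms(2-5) by (simp_all add: l1_def l5_def m1_def amean_def logmean_pos)
  have w1: "(c + (2 * K + Rg) * ln a + Rg * ln p - (x1\<^sup>2 + x2\<^sup>2 + x3\<^sup>2) / 2
          - (c + (2 * K + Rg) * ln b + Rg * ln q - (y1\<^sup>2 + y2\<^sup>2 + y3\<^sup>2) / 2)) * (l5 * m1)
      = (2 * K + Rg) * (a - b) * l5 * m1 / l1 + Rg * (p - q) * m1
        - ((x1\<^sup>2 - y1\<^sup>2) + (x2\<^sup>2 - y2\<^sup>2) + (x3\<^sup>2 - y3\<^sup>2)) / 2 * l5 * m1"
  proof -
    have ln_jumps: "ln a - ln b = (a - b) / l1" "ln p - ln q = (p - q) / l5"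
      using logmean_ln_diff[of a b] logmean_ln_diff[of p q] pos assms(2-5)
      by (simp_all add: l1_def l5_def field_simps)
    have "(c + (2 * K + Rg) * ln a + Rg * ln p - (x1\<^sup>2 + x2\<^sup>2 + x3\<^sup>2) / 2
          - (c + (2 * K + Rg) * ln b + Rg * ln q - (y1\<^sup>2 + y2\<^sup>2 + y3\<^sup>2) / 2)) * (l5 * m1)
        = ((2 * K + Rg) * (ln a - ln b) + Rg * (ln p - ln q)
          - ((x1\<^sup>2 - y1\<^sup>2) + (x2\<^sup>2 - y2\<^sup>2) + (x3\<^sup>2 - y3\<^sup>2)) / 2) * (l5 * m1)"
      by (simp add: field_simps)
    also have "\<dots> = ((2 * K + Rg) * ((a - b) / l1) + Rg * ((p - q) / l5)
          - ((x1\<^sup>2 - y1\<^sup>2) + (x2\<^sup>2 - y2\<^sup>2) + (x3\<^sup>2 - y3\<^sup>2)) / 2) * (l5 * m1)"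
      unfolding ln_jumps ..
    also have "\<dots> = (2 * K + Rg) * (a - b) * l5 * m1 / l1 + Rg * (p - q) * m1
        - ((x1\<^sup>2 - y1\<^sup>2) + (x2\<^sup>2 - y2\<^sup>2) + (x3\<^sup>2 - y3\<^sup>2)) / 2 * l5 * m1"
      using pos by (simp add: field_simps)
    finally show ?thesis .
  qed
  have w5: "(- (a\<^sup>2) - - (b\<^sup>2)) *
           (1/2 * l5 * (Rg * (\<gamma> + 1) / ((\<gamma> - 1) * l1) + 1 / m1 * (m2\<^sup>2 + m3\<^sup>2 + m4\<^sup>2 - Rg * m5 / l5)))
      = - (2 * K + Rg) * (a - b) * l5 * m1 / l1 - (a - b) * l5 * (m2\<^sup>2 + m3\<^sup>2 + m4\<^sup>2) + Rg * (a - b) * m5"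
  proof -
    have sq: "- (a\<^sup>2) - - (b\<^sup>2) = - 2 * (a - b) * m1"
      by (simp add: m1_def amean_def power2_eq_square algebra_simps)
    have cv: "Rg * (\<gamma> + 1) / ((\<gamma> - 1) * l1) = (2 * K + Rg) / l1"
      using assms(1) by (simp add: K_def field_simps)
    show ?thesis unfolding sq cv using pos by (simp add: field_simps)
  qed
  show ?thesis
    unfolding w1 w5 unfolding m1_def m2_def m3_def m4_def m5_def amean_def
    using pos(1) by (simp add: field_simps power2_eq_square)
qed

lemma U1_shuffle:
  assumes "\<gamma> \<noteq> 1" "Tinf > 0" "rhoinf > 0" "admissible L" "admissible R"
  shows "(entvar Rg \<gamma> Tinf rhoinf L - entvar Rg \<gamma> Tinf rhoinf R) \<bullet> U1 Rg \<gamma> L R =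
          (entvar Rg \<gamma> Tinf rhoinf L \<bullet> cons Rg \<gamma> L - math_entropy Rg \<gamma> Tinf rhoinf L)
        - (entvar Rg \<gamma> Tinf rhoinf R \<bullet> cons Rg \<gamma> R - math_entropy Rg \<gamma> Tinf rhoinf R)"
proof -
  have pos: "rho L > 0" "rho R > 0" "temp L > 0" "temp R > 0"
    using assms(4,5) by (auto simp: admissible_def)
  have "(entvar Rg \<gamma> Tinf rhoinf L - entvar Rg \<gamma> Tinf rhoinf R) \<bullet> U1 Rg \<gamma> L R =
      Rg * (1 / sqrt (temp L) * (rho L * sqrt (temp L)) - 1 / sqrt (temp R) * (rho R * sqrt (temp R)))"
    unfolding entvar_U1_coords[OF assms(1-4)] entvar_U1_coords[OF assms(1-3,5)] U1_def Let_def
      vector_5_diff inner_vector_5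
    by (rule U1_shuffle_in_coords) (use assms(1) pos in auto)
  also have "\<dots> = Rg * rho L - Rg * rho R"
    using pos by (simp add: algebra_simps)
  finally show ?thesis
    using pos assms(1) by (simp add: entvar_inner_cons_minus_math_entropy)
qed

lemma entvar_U2_coords:
  fixes Rg \<gamma> Tinf rhoinf :: real
  assumes "\<gamma> \<noteq> 1" "Tinf > 0" "rhoinf > 0" "admissible p"
  defines "\<beta> \<equiv> 1 / temp p"
    and "c \<equiv> Rg + Rg / (\<gamma> - 1) + Rg / (\<gamma> - 1) * ln Tinf - Rg * ln rhoinf"
  shows "entvar Rg \<gamma> Tinf rhoinf p =
    vector [c + Rg / (\<gamma> - 1) * ln \<beta> + Rg * ln (rho p) - ((v1 p)\<^sup>2 + (v2 p)\<^sup>2 + (v3 p)\<^sup>2) * \<beta> / 2,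
            v1 p * \<beta>, v2 p * \<beta>, v3 p * \<beta>, - \<beta>]"
proof -
  have T: "temp p > 0" and rho: "rho p > 0" using assms(4) by (auto simp: admissible_def)
  have entropy: "thermo_entropy Rg \<gamma> Tinf rhoinf p =
      Rg / (\<gamma> - 1) * (- ln \<beta> - ln Tinf) - Rg * (ln (rho p) - ln rhoinf)"
    unfolding \<beta>_def using T rho assms(2,3) by (simp add: thermo_entropy_def ln_div)
  have kinetic: "vsq p / (2 * temp p) = ((v1 p)\<^sup>2 + (v2 p)\<^sup>2 + (v3 p)\<^sup>2) * \<beta> / 2"
    unfolding vsq_def \<beta>_def by simp
  have enthalpy: "enthalpy Rg \<gamma> p / temp p = Rg + Rg / (\<gamma> - 1)"
    using T assms(1) by (simp add: enthalpy_def cp_eq_Rg_plus_cv)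
  show ?thesis
    unfolding vector_5_eq_iff entvar_def entropy kinetic enthalpy c_def
    by (simp add: \<beta>_def algebra_simps)
qed

lemma U2_shuffle_in_coords:
  fixes Rg \<gamma> r s \<beta> \<delta> x1 x2 x3 y1 y2 y3 :: real
  assumes "\<gamma> \<noteq> 1" "r > 0" "s > 0" "\<beta> > 0" "\<delta> > 0"
  defines "K \<equiv> Rg / (\<gamma> - 1)" and "l1 \<equiv> logmean r s" and "l5 \<equiv> logmean \<beta> \<delta>"
    and "m2 \<equiv> amean x1 y1" and "m3 \<equiv> amean x2 y2" and "m4 \<equiv> amean x3 y3"
    and "q2 \<equiv> sqmean x1 y1" and "q3 \<equiv> sqmean x2 y2" and "q4 \<equiv> sqmean x3 y3"
  shows "(c + K * ln \<beta> + Rg * ln r - (x1\<^sup>2 + x2\<^sup>2 + x3\<^sup>2) * \<beta> / 2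
          - (c + K * ln \<delta> + Rg * ln s - (y1\<^sup>2 + y2\<^sup>2 + y3\<^sup>2) * \<delta> / 2)) * l1
       + (x1 * \<beta> - y1 * \<delta>) * (l1 * m2) + (x2 * \<beta> - y2 * \<delta>) * (l1 * m3)
       + (x3 * \<beta> - y3 * \<delta>) * (l1 * m4)
       + (- \<beta> - - \<delta>) * (l1 * (Rg / ((\<gamma> - 1) * l5) + m2\<^sup>2 + m3\<^sup>2 + m4\<^sup>2 - 1/2 * (q2 + q3 + q4)))
       = Rg * (r - s)"
proof -
  have pos: "l1 > 0" "l5 > 0"
    using assms(2-5) by (simp_all add: l1_def l5_def logmean_pos)
  have w1: "(c + K * ln \<beta> + Rg * ln r - (x1\<^sup>2 + x2\<^sup>2 + x3\<^sup>2) * \<beta> / 2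
          - (c + K * ln \<delta> + Rg * ln s - (y1\<^sup>2 + y2\<^sup>2 + y3\<^sup>2) * \<delta> / 2)) * l1
      = K * (\<beta> - \<delta>) * l1 / l5 + Rg * (r - s)
        - ((x1\<^sup>2 + x2\<^sup>2 + x3\<^sup>2) * \<beta> - (y1\<^sup>2 + y2\<^sup>2 + y3\<^sup>2) * \<delta>) / 2 * l1"
  proof -
    have ln_jumps: "ln \<beta> - ln \<delta> = (\<beta> - \<delta>) / l5" "ln r - ln s = (r - s) / l1"
      using logmean_ln_diff[of \<beta> \<delta>] logmean_ln_diff[of r s] pos assms(2-5)
      by (simp_all add: l1_def l5_def field_simps)
    have "(c + K * ln \<beta> + Rg * ln r - (x1\<^sup>2 + x2\<^sup>2 + x3\<^sup>2) * \<beta> / 2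
          - (c + K * ln \<delta> + Rg * ln s - (y1\<^sup>2 + y2\<^sup>2 + y3\<^sup>2) * \<delta> / 2)) * l1
        = (K * (ln \<beta> - ln \<delta>) + Rg * (ln r - ln s)
          - ((x1\<^sup>2 + x2\<^sup>2 + x3\<^sup>2) * \<beta> - (y1\<^sup>2 + y2\<^sup>2 + y3\<^sup>2) * \<delta>) / 2) * l1"
      by (simp add: field_simps)
    also have "\<dots> = (K * ((\<beta> - \<delta>) / l5) + Rg * ((r - s) / l1)
          - ((x1\<^sup>2 + x2\<^sup>2 + x3\<^sup>2) * \<beta> - (y1\<^sup>2 + y2\<^sup>2 + y3\<^sup>2) * \<delta>) / 2) * l1"
      unfolding ln_jumps ..
    also have "\<dots> = K * (\<beta> - \<delta>) * l1 / l5 + Rg * (r - s)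
        - ((x1\<^sup>2 + x2\<^sup>2 + x3\<^sup>2) * \<beta> - (y1\<^sup>2 + y2\<^sup>2 + y3\<^sup>2) * \<delta>) / 2 * l1"
      using pos by (simp add: field_simps)
    finally show ?thesis .
  qed
  have w5: "(- \<beta> - - \<delta>) * (l1 * (Rg / ((\<gamma> - 1) * l5) + m2\<^sup>2 + m3\<^sup>2 + m4\<^sup>2 - 1/2 * (q2 + q3 + q4)))
      = - K * (\<beta> - \<delta>) * l1 / l5 - (\<beta> - \<delta>) * l1 * (m2\<^sup>2 + m3\<^sup>2 + m4\<^sup>2 - 1/2 * (q2 + q3 + q4))"
  proof -
    have cv: "Rg / ((\<gamma> - 1) * l5) = K / l5" by (simp add: K_def)
    show ?thesis unfolding cv using pos by (simp add: field_simps)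
  qed
  show ?thesis
    unfolding w1 w5 unfolding m2_def m3_def m4_def q2_def q3_def q4_def amean_def sqmean_def
    using pos(2) by (simp add: field_simps power2_eq_square)
qed

lemma U2_shuffle:
  assumes "\<gamma> \<noteq> 1" "Tinf > 0" "rhoinf > 0" "admissible L" "admissible R"
  shows "(entvar Rg \<gamma> Tinf rhoinf L - entvar Rg \<gamma> Tinf rhoinf R) \<bullet> U2 Rg \<gamma> L R =
          (entvar Rg \<gamma> Tinf rhoinf L \<bullet> cons Rg \<gamma> L - math_entropy Rg \<gamma> Tinf rhoinf L)
        - (entvar Rg \<gamma> Tinf rhoinf R \<bullet> cons Rg \<gamma> R - math_entropy Rg \<gamma> Tinf rhoinf R)"
proof -
  have pos: "rho L > 0" "rho R > 0" "temp L > 0" "temp R > 0"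
    using assms(4,5) by (auto simp: admissible_def)
  have "(entvar Rg \<gamma> Tinf rhoinf L - entvar Rg \<gamma> Tinf rhoinf R) \<bullet> U2 Rg \<gamma> L R = Rg * (rho L - rho R)"
    unfolding entvar_U2_coords[OF assms(1-4)] entvar_U2_coords[OF assms(1-3,5)] U2_def Let_def
      vector_5_diff inner_vector_5
    by (rule U2_shuffle_in_coords) (use assms(1) pos in auto)
  then show ?thesis
    using pos assms(1) by (simp add: entvar_inner_cons_minus_math_entropy algebra_simps)
qed

lemma U1_commute: "U1 Rg \<gamma> L R = U1 Rg \<gamma> R L"
  unfolding U1_def Let_def by (simp add: amean_commute logmean_commute)

lemma U2_commute: "U2 Rg \<gamma> L R = U2 Rg \<gamma> R L"
  unfolding U2_def Let_def by (simp add: amean_commute sqmean_commute logmean_commute)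

lemma U1_consistent:
  assumes "\<gamma> \<noteq> 1" "admissible p"
  shows "U1 Rg \<gamma> p p = cons Rg \<gamma> p"
proof -
  obtain \<tau> where \<tau>: "\<tau> > 0" "temp p = \<tau>\<^sup>2"
    using assms(2) by (metis admissible_def real_sqrt_gt_0_iff real_sqrt_pow2 less_eq_real_def)
  have "\<gamma> - 1 \<noteq> 0" using assms(1) by simp
  then show ?thesis
    unfolding U1_def Let_def cons_def energy_def vsq_def vector_5_eq_iff \<tau>(2)
    using \<tau>(1) by (simp add: field_simps power2_eq_square)
qed

lemma U2_consistent:
  assumes "\<gamma> \<noteq> 1" "admissible p"
  shows "U2 Rg \<gamma> p p = cons Rg \<gamma> p"
proof -
  have "temp p > 0" using assms(2) by (simp add: admissible_def)
  moreover have "\<gamma> - 1 \<noteq> 0" using assms(1) by simp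
  ultimately show ?thesis
    unfolding U2_def Let_def cons_def energy_def vsq_def sqmean_def vector_5_eq_iff
    by (simp add: field_simps power2_eq_square)
qed

theorem lemma5p1:
  fixes Rg \<gamma> Tinf rhoinf :: real
  assumes "Rg > 0" and "\<gamma> > 1" and "Tinf > 0" and "rhoinf > 0"
  shows "ec_properties Rg \<gamma> Tinf rhoinf (U1 Rg \<gamma>) \<and> ec_properties Rg \<gamma> Tinf rhoinf (U2 Rg \<gamma>)"
proof -
  have \<gamma>: "\<gamma> \<noteq> 1" using assms(2) by simp
  show ?thesis
    unfolding ec_properties_def
    using U1_commute U2_commute U1_consistent[OF \<gamma>] U2_consistent[OF \<gamma>]
      U1_shuffle[OF \<gamma> assms(3,4)] U2_shuffle[OF \<gamma> assms(3,4)]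
    by blast
qed

end
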